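(* Let $p$ be an odd prime with $3 \mid (p-1)$. Then there exists an MDS $(3p,\,10)_{p}$ symbol-pair code, i.e., a code $\mathcal{C}\subseteq \mathbb{F}_p^{3p}$ with minimum symbol-pair distance $d_p(\mathcal{C})=10$ and $|\mathcal{C}| = p^{3p-10+2}$.
   Context: For a vector $\mathbf{x}=(x_0,\dots,x_{n-1})\in\mathbb{F}_q^n$ (indices taken modulo $n$), the symbol-pair distance between $\mathbf{x},\mathbf{y}\in\mathbb{F}_q^n$ is $d_p(\mathbf{x},\mathbf{y})=|\{i\in\mathbb{Z}_n : (x_i,x_{i+1})\neq(y_i,y_{i+1})\}|$. The minimum symbol-pair distance of a code $\mathcal{C}\subseteq\mathbb{F}_q^n$ is $d_p(\mathcal{C})=\min\{d_p(\mathbf{x},\mathbf{y}) : \mathbf{x},\mathbf{y}\in\mathcal{C},\ \mathbf{x}\neq\mathbf{y}\}$. Any code of length $n$ over $\mathbb{F}_q$ with minimum symbol-pair distance $d_p$ (where $2\le d_p\le n$) satisfies the Singleton-type bound $|\mathcal{C}|\le q^{n-d_p+2}$; a code attaining equality is called an MDS symbol-pair code. An $(n,d_p)_q$ symbol-pair code is a code of length $n$ over $\mathbb{F}_q$ with minimum symbol-pair distance $d_p$. *)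

theory Defs
  imports "HOL-Number_Theory.Number_Theory"
begin

text \<open>Words of length n over F_q are represented as lists of length n with entries
  in {0..<q} (the elements of the prime field F_p identified with residues).
  Indices are taken modulo n (cyclic pairs).\<close>

definition words :: "nat \<Rightarrow> nat \<Rightarrow> nat list set" where
  "words q n = {x. length x = n \<and> set x \<subseteq> {0..<q}}"

definition pair_dist :: "nat list \<Rightarrow> nat list \<Rightarrow> nat" where
  "pair_dist x y = (let n = length x in
     card {i \<in> {0..<n}. (x ! i, x ! ((i + 1) mod n)) \<noteq> (y ! i, y ! ((i + 1) mod n))})"

definition min_pair_dist :: "nat list set \<Rightarrow> nat" where
  "min_pair_dist C = Min {pair_dist x y | x y. x \<in> C \<and> y \<in> C \<and> x \<noteq> y}"

end

theory Submission
  imports Defs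
begin

text \<open>The code is cut out by eight parity checks modulo \<open>p\<close> on the positions \<open>0, ..., 3p - 1\<close>:
  for each residue class modulo 3 the sums of \<open>x\<^sub>i\<close> and of \<open>i x\<^sub>i\<close> over that class vanish,
  and so do the sums of \<open>i\<^sup>2 x\<^sub>i\<close> and \<open>i\<^sup>3 x\<^sub>i\<close> over all positions; hence it has at least
  \<open>p\<^bsup>3p-8\<^esup>\<close> words. Positions in one residue class are distinct modulo \<open>p\<close>, so by Vandermonde the
  moment conditions force the difference of two codewords to vanish on every class where it
  has few nonzero entries. A difference of pair weight at most 9 has at most 4 nonzero entries in
  each class, and if two classes carry 3 or more, both carry exactly 3, one being the cyclic shift
  of the other; the quadratic and cubic checks rule this out as well. So distinct codewords have
  pair distance at least 10, the Singleton-type bound gives exactly \<open>p\<^bsup>3p-8\<^esup>\<close> codewords, and by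
  pigeonhole two of them agree outside the first 9 positions, i.e. have pair distance at most 10.\<close>

section \<open>Words and the pair distance\<close>

lemma words_eq_lists: "words q n = {xs. set xs \<subseteq> {0..<q} \<and> length xs = n}"
  unfolding words_def by auto

lemma card_words: "card (words q n) = q ^ n"
  unfolding words_eq_lists by (simp add: card_lists_length_eq)

lemma finite_words: "finite (words q n)"
  unfolding words_eq_lists by (simp add: finite_lists_length_eq)

lemma words_nth_less: "x \<in> words q n \<Longrightarrow> i < n \<Longrightarrow> x ! i < q"
  unfolding words_def by (auto dest!: nth_mem)

lemma drop_in_words: "x \<in> words q n \<Longrightarrow> drop k x \<in> words q (n - k)"
  unfolding words_def by (auto dest: in_set_dropD)

lemma words_eqI:
  assumes "x \<in> words p n" "y \<in> words p n" "\<And>i. i < n \<Longrightarrow> [x ! i = y ! i] (mod p)"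
  shows "x = y"
proof (rule nth_equalityI)
  show "length x = length y" using assms(1,2) unfolding words_def by simp
  fix i assume "i < length x"
  then have "i < n" using assms(1) unfolding words_def by simp
  then show "x ! i = y ! i"
    using assms(3) words_nth_less[OF assms(1)] words_nth_less[OF assms(2)]
    by (blast intro: cong_less_modulus_unique_nat)
qed

lemma pair_dist_le_of_drop_eq:
  assumes "length x = n" "length y = n" "drop k x = drop k y"
  shows "pair_dist x y \<le> k + 1"
proof -
  have same: "x ! i = y ! i" if "k \<le> i" "i < n" for i
  proof -
    have "x ! i = drop k x ! (i - k)" "y ! i = drop k y ! (i - k)"
      using that assms(1,2) by simp_all
    then show ?thesis using assms(3) by simp
  qed
  let ?S = "{i \<in> {0..<n}. (x ! i, x ! ((i + 1) mod n)) \<noteq> (y ! i, y ! ((i + 1) mod n))}"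
  have "?S \<subseteq> insert (n - 1) {..<k}"
  proof
    fix i assume i: "i \<in> ?S"
    show "i \<in> insert (n - 1) {..<k}"
    proof (cases "i = n - 1")
      case False
      then have "i + 1 < n" using i by auto
      then have "x ! i \<noteq> y ! i \<or> x ! (i + 1) \<noteq> y ! (i + 1)" using i by simp
      then have "i < k" using same[of i] same[of "i + 1"] \<open>i + 1 < n\<close> by linarith
      then show ?thesis by simp
    qed simp
  qed
  then have "pair_dist x y \<le> card (insert (n - 1) {..<k})"
    unfolding pair_dist_def Let_def assms(1) by (intro card_mono) simp_all
  also have "\<dots> \<le> k + 1" by (simp add: card_insert_if)
  finally show ?thesis .
qed

lemma card_le_if_inj_on_drop:
  assumes "C \<subseteq> words q n" "inj_on (drop k) C"
  shows "card C \<le> q ^ (n - k)"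
proof -
  have "card C = card (drop k ` C)" using assms(2) by (simp add: card_image)
  also have "\<dots> \<le> card (words q (n - k))"
    using assms(1) drop_in_words by (intro card_mono finite_words) blast
  finally show ?thesis by (simp add: card_words)
qed

lemma pair_singleton_bound:
  assumes "C \<subseteq> words q n" "2 \<le> d"
    and "\<And>x y. x \<in> C \<Longrightarrow> y \<in> C \<Longrightarrow> x \<noteq> y \<Longrightarrow> d \<le> pair_dist x y"
  shows "card C \<le> q ^ (n - (d - 2))"
proof (rule card_le_if_inj_on_drop[OF assms(1)], rule inj_onI, rule ccontr)
  fix x y assume xy: "x \<in> C" "y \<in> C" "drop (d - 2) x = drop (d - 2) y" "x \<noteq> y"
  have "length x = n" "length y = n" using xy assms(1) unfolding words_def by auto
  then have "pair_dist x y \<le> d - 2 + 1" using pair_dist_le_of_drop_eq xy(3) by blast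
  then show False using assms(3)[OF xy(1,2,4)] assms(2) by linarith
qed

lemma exists_close_pair:
  assumes "C \<subseteq> words q n" "q ^ (n - k) < card C"
  obtains x y where "x \<in> C" "y \<in> C" "x \<noteq> y" "pair_dist x y \<le> k + 1"
proof -
  have "\<not> inj_on (drop k) C" using card_le_if_inj_on_drop[OF assms(1)] assms(2) not_le by blast
  then obtain x y where xy: "x \<in> C" "y \<in> C" "x \<noteq> y" "drop k x = drop k y"
    unfolding inj_on_def by blast
  then have "length x = n" "length y = n" using assms(1) unfolding words_def by auto
  then show ?thesis using that xy pair_dist_le_of_drop_eq by blast
qed

lemma min_pair_dist_eqI:
  assumes "finite C" "\<And>x y. x \<in> C \<Longrightarrow> y \<in> C \<Longrightarrow> x \<noteq> y \<Longrightarrow> d \<le> pair_dist x y"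
    and "x \<in> C" "y \<in> C" "x \<noteq> y" "pair_dist x y \<le> d"
  shows "min_pair_dist C = d"
proof -
  have "{pair_dist x y | x y. x \<in> C \<and> y \<in> C \<and> x \<noteq> y} \<subseteq> (\<lambda>(x, y). pair_dist x y) ` (C \<times> C)"
    by auto
  then have "finite {pair_dist x y | x y. x \<in> C \<and> y \<in> C \<and> x \<noteq> y}"
    using assms(1) finite_subset by blast
  then show ?thesis unfolding min_pair_dist_def
    using assms(2-6) le_antisym by (intro Min_eqI) blast+
qed

section \<open>Codes cut out by parity checks modulo a prime\<close>

definition linear_code :: "nat \<Rightarrow> nat \<Rightarrow> nat \<Rightarrow> (nat \<Rightarrow> nat \<Rightarrow> int) \<Rightarrow> nat list set" where
  "linear_code p n m H = {x \<in> words p n. \<forall>j<m. int p dvd (\<Sum>i<n. int (x ! i) * H j i)}"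

definition syndrome :: "nat \<Rightarrow> nat \<Rightarrow> nat \<Rightarrow> (nat \<Rightarrow> nat \<Rightarrow> int) \<Rightarrow> nat list \<Rightarrow> int list" where
  "syndrome p n m H x = map (\<lambda>j. (\<Sum>i<n. int (x ! i) * H j i) mod int p) [0..<m]"

lemma linear_code_diff:
  assumes "x \<in> linear_code p n m H" "y \<in> linear_code p n m H" "j < m"
  shows "int p dvd (\<Sum>i<n. (int (x ! i) - int (y ! i)) * H j i)"
  using assms unfolding linear_code_def by (simp add: sum_subtractf left_diff_distrib dvd_diff)

lemma card_syndrome_fiber_le:
  assumes "0 < p" "x0 \<in> words p n"
  shows "card {x \<in> words p n. syndrome p n m H x = syndrome p n m H x0} \<le> card (linear_code p n m H)"
proof -
  define F where "F = {x \<in> words p n. syndrome p n m H x = syndrome p n m H x0}"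
  define f where "f x = map (\<lambda>i. nat ((int (x ! i) - int (x0 ! i)) mod int p)) [0..<n]" for x
  have f_nth: "[int (f x ! i) = int (x ! i) - int (x0 ! i)] (mod int p)" if "i < n" for x i
    using that assms(1) unfolding f_def cong_def by simp
  have "inj_on f F"
  proof
    fix x y assume xy: "x \<in> F" "y \<in> F" "f x = f y"
    have "[x ! i = y ! i] (mod p)" if "i < n" for i
    proof -
      have "[int (x ! i) - int (x0 ! i) = int (y ! i) - int (x0 ! i)] (mod int p)"
        using f_nth[OF that, of x] f_nth[OF that, of y] xy(3) by (metis cong_sym cong_trans)
      then have "[int (x ! i) = int (y ! i)] (mod int p)"
        using cong_add[OF _ cong_refl[of "int (x0 ! i)"]] by fastforce
      then show ?thesis by (simp add: cong_int_iff)
    qed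
    then show "x = y" using xy unfolding F_def by (blast intro: words_eqI)
  qed
  moreover have "f ` F \<subseteq> linear_code p n m H"
  proof
    fix z assume "z \<in> f ` F"
    then obtain x where x: "x \<in> F" and z: "z = f x" by auto
    have "z \<in> words p n" unfolding z words_def f_def using assms(1) by (auto simp: nat_less_iff)
    moreover have "int p dvd (\<Sum>i<n. int (z ! i) * H j i)" if j: "j < m" for j
    proof -
      have "syndrome p n m H x ! j = syndrome p n m H x0 ! j" using x unfolding F_def by simp
      then have "[(\<Sum>i<n. int (x ! i) * H j i) = (\<Sum>i<n. int (x0 ! i) * H j i)] (mod int p)"
        using j unfolding syndrome_def cong_def by simp
      then have "[(\<Sum>i<n. (int (x ! i) - int (x0 ! i)) * H j i) = 0] (mod int p)"
        by (simp add: sum_subtractf left_diff_distrib cong_iff_dvd_diff)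
      moreover have "[(\<Sum>i<n. int (z ! i) * H j i) = (\<Sum>i<n. (int (x ! i) - int (x0 ! i)) * H j i)] (mod int p)"
        using f_nth z by (intro cong_sum cong_mult cong_refl) auto
      ultimately show ?thesis using cong_0_iff cong_trans by blast
    qed
    ultimately show "z \<in> linear_code p n m H" unfolding linear_code_def by simp
  qed
  moreover have "finite (linear_code p n m H)"
    using finite_words by (simp add: linear_code_def)
  ultimately show ?thesis unfolding F_def[symmetric] by (metis card_image card_mono)
qed

lemma card_linear_code_ge:
  assumes "0 < p" "m \<le> n"
  shows "p ^ (n - m) \<le> card (linear_code p n m H)"
proof -
  define W where "W = words p n"
  define S where "S = syndrome p n m H ` W"
  have S_sub: "S \<subseteq> {s. set s \<subseteq> {0..<int p} \<and> length s = m}"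
    unfolding S_def syndrome_def using assms(1) by auto
  then have "finite S" using finite_lists_length_eq[of "{0..<int p}"] finite_subset by blast
  have card_S: "card S \<le> p ^ m"
    using card_mono[OF _ S_sub] by (simp add: finite_lists_length_eq card_lists_length_eq)
  have "W = (\<Union>s\<in>S. {x \<in> W. syndrome p n m H x = s})" unfolding S_def by auto
  then have "p ^ n \<le> (\<Sum>s\<in>S. card {x \<in> W. syndrome p n m H x = s})"
    using card_UN_le[OF \<open>finite S\<close>] unfolding W_def by (metis card_words)
  also have "\<dots> \<le> (\<Sum>s\<in>S. card (linear_code p n m H))"
    using card_syndrome_fiber_le[OF assms(1)] unfolding S_def W_def by (intro sum_mono) auto
  also have "\<dots> \<le> p ^ m * card (linear_code p n m H)" using card_S by simp
  finally have "p ^ m * p ^ (n - m) \<le> p ^ m * card (linear_code p n m H)"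
    using assms(2) by (simp add: power_add[symmetric])
  then show ?thesis using assms(1) by simp
qed

section \<open>Power sums modulo a prime\<close>

lemma prime_dvd_coeffs_of_power_sums:
  fixes p :: int and t c :: "'a \<Rightarrow> int"
  assumes "prime p" "finite J"
    and "\<forall>a\<in>J. \<forall>b\<in>J. p dvd (t a - t b) \<longrightarrow> a = b"
    and "\<forall>k<card J. p dvd (\<Sum>j\<in>J. c j * t j ^ k)"
  shows "\<forall>j\<in>J. p dvd c j"
  using assms(2-4)
proof (induction J arbitrary: c rule: finite_induct)
  case empty
  then show ?case by simp
next
  case (insert x F)
  have split: "(\<Sum>j\<in>insert x F. c j * t j ^ k) = c x * t x ^ k + (\<Sum>j\<in>F. c j * t j ^ k)" for k
    using insert.hyps by simp
  \<comment> \<open>Multiplying the coefficients by \<open>t j - t x\<close> kills the term of \<open>x\<close> and keeps the power sums divisible.\<close>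
  define c' where "c' j = c j * (t j - t x)" for j
  have "p dvd (\<Sum>j\<in>F. c' j * t j ^ k)" if k: "k < card F" for k
  proof -
    have e: "(\<Sum>j\<in>F. c' j * t j ^ k)
        = (\<Sum>j\<in>insert x F. c j * t j ^ Suc k) - t x * (\<Sum>j\<in>insert x F. c j * t j ^ k)"
      unfolding split by (simp add: c'_def sum_subtractf sum_distrib_left algebra_simps)
    have "Suc k < card (insert x F)" using k insert.hyps by simp
    then have "p dvd (\<Sum>j\<in>insert x F. c j * t j ^ Suc k)" "p dvd (\<Sum>j\<in>insert x F. c j * t j ^ k)"
      using insert.prems(2) Suc_lessD by blast+
    then show ?thesis unfolding e by (intro dvd_diff dvd_mult)
  qed
  then have "\<forall>j\<in>F. p dvd c' j" using insert.IH insert.prems(1) by blast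
  moreover have "\<not> p dvd (t j - t x)" if "j \<in> F" for j
    using insert.prems(1) insert.hyps(2) that by blast
  ultimately have F_dvd: "\<forall>j\<in>F. p dvd c j"
    using assms(1) unfolding c'_def by (auto simp: prime_dvd_mult_iff)
  have "0 < card (insert x F)" using insert.hyps(1) by (simp add: card_gt_0_iff)
  then have "p dvd (\<Sum>j\<in>insert x F. c j * t j ^ 0)" using insert.prems(2) by blast
  then have "p dvd c x + (\<Sum>j\<in>F. c j)" unfolding split by simp
  moreover have "p dvd (\<Sum>j\<in>F. c j)" using F_dvd by (simp add: dvd_sum)
  ultimately show ?case using F_dvd by (simp add: dvd_add_left_iff)
qed

lemma shifted_power_sums_dvd:
  fixes p :: int and t a b :: "'a \<Rightarrow> int"
  assumes prime: "prime p" and not_dvd_3: "\<not> p dvd 3" and "finite A" "card A \<le> 3"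
    and inj: "\<forall>x\<in>A. \<forall>y\<in>A. p dvd (t x - t y) \<longrightarrow> x = y"
    and a_low: "\<And>k. k < 2 \<Longrightarrow> p dvd (\<Sum>j\<in>A. a j * t j ^ k)"
    and b_low: "\<And>k. k < 2 \<Longrightarrow> p dvd (\<Sum>j\<in>A. b j * (t j + 1) ^ k)"
    and mixed: "\<And>k. k \<in> {2, 3} \<Longrightarrow> p dvd (\<Sum>j\<in>A. a j * t j ^ k) + (\<Sum>j\<in>A. b j * (t j + 1) ^ k)"
  shows "\<forall>j\<in>A. p dvd a j \<and> p dvd b j"
proof -
  \<comment> \<open>The low power sums of \<open>b\<close> vanish, so \<open>a + b\<close> has three vanishing power sums and is zero;
    then the cubic condition reduces to \<open>3\<close> times the quadratic power sum of \<open>b\<close>.\<close>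
  define S where "S f k = (\<Sum>j\<in>A. f j * t j ^ k)" for f k
  have below_3: "k = 0 \<or> k = 1 \<or> k = 2" if "k < 3" for k :: nat using that by auto
  have vanish: "\<forall>j\<in>A. p dvd f j" if "\<And>k. k < 3 \<Longrightarrow> p dvd S f k" for f
    using prime_dvd_coeffs_of_power_sums[OF prime \<open>finite A\<close> inj] that \<open>card A \<le> 3\<close>
    unfolding S_def by simp
  have S_add: "S (\<lambda>j. f j + g j) k = S f k + S g k" for f g k
    unfolding S_def by (simp add: sum.distrib distrib_right)
  have T0: "(\<Sum>j\<in>A. b j * (t j + 1) ^ 0) = S b 0"
    and T1: "(\<Sum>j\<in>A. b j * (t j + 1) ^ 1) = S b 1 + S b 0"
    and T2: "(\<Sum>j\<in>A. b j * (t j + 1) ^ 2) = S b 2 + 2 * S b 1 + S b 0"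
    and T3: "(\<Sum>j\<in>A. b j * (t j + 1) ^ 3) = S b 3 + 3 * S b 2 + 3 * S b 1 + S b 0"
    unfolding S_def by (simp_all add: sum.distrib[symmetric] sum_distrib_left algebra_simps
        power2_eq_square power3_eq_cube)
  have b0: "p dvd S b 0" using b_low[of 0] T0 by simp
  have b1: "p dvd S b 1" using b_low[of 1] T1 b0 by (simp add: dvd_add_left_iff)
  define u where "u j = a j + b j" for j
  have "p dvd S u k" if "k < 3" for k
  proof -
    have "k < 2 \<or> k = 2" using that by auto
    moreover have "p dvd S u 2"
    proof -
      have "S u 2 = (S a 2 + (\<Sum>j\<in>A. b j * (t j + 1) ^ 2)) - 2 * S b 1 - S b 0"
        unfolding u_def S_add T2 by simp
      then show ?thesis using mixed[of 2] b0 b1 unfolding S_def[symmetric] by (simp add: dvd_diff)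
    qed
    ultimately show ?thesis
      using a_low[unfolded S_def[symmetric]] b0 b1 unfolding u_def S_add
      by (auto simp: less_2_cases_iff)
  qed
  then have u_dvd: "\<forall>j\<in>A. p dvd u j" by (rule vanish)
  then have "p dvd S u 3" unfolding S_def by (simp add: dvd_sum)
  moreover have "3 * S b 2 = (S a 3 + (\<Sum>j\<in>A. b j * (t j + 1) ^ 3)) - S u 3 - 3 * S b 1 - S b 0"
    unfolding T3 u_def S_add by simp
  ultimately have "p dvd 3 * S b 2"
    using mixed[of 3] b0 b1 unfolding S_def[symmetric] by (simp add: dvd_diff)
  then have "p dvd S b 2" using prime not_dvd_3 by (simp add: prime_dvd_mult_iff)
  then have "\<forall>j\<in>A. p dvd b j" using b0 b1 below_3 by (intro vanish) blast
  moreover have "a j = u j - b j" for j unfolding u_def by simp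
  ultimately show ?thesis using u_dvd by (simp add: dvd_diff)
qed

section \<open>Vectors of pair weight at most 9\<close>

lemma mod_3_cases:
  fixes q r :: nat
  assumes "q < 3"
  obtains "r mod 3 = q" | "r mod 3 = (q + 1) mod 3" | "r mod 3 = (q + 2) mod 3"
proof -
  have "q = 0 \<or> q = 1 \<or> q = 2" "r mod 3 = 0 \<or> r mod 3 = 1 \<or> r mod 3 = 2"
    using assms mod_less_divisor[of 3 r] by auto
  then show ?thesis using that by fastforce
qed

lemma mod_3_rotate:
  fixes q :: nat
  assumes "q < 3"
  shows "((q + 1) mod 3 + 1) mod 3 = (q + 2) mod 3" "((q + 2) mod 3 + 1) mod 3 = q"
    and "q \<noteq> (q + 1) mod 3" "q \<noteq> (q + 2) mod 3" "(q + 1) mod 3 \<noteq> (q + 2) mod 3"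
proof -
  have "q = 0 \<or> q = 1 \<or> q = 2" using assms by auto
  then show "((q + 1) mod 3 + 1) mod 3 = (q + 2) mod 3" "((q + 2) mod 3 + 1) mod 3 = q"
    and "q \<noteq> (q + 1) mod 3" "q \<noteq> (q + 2) mod 3" "(q + 1) mod 3 \<noteq> (q + 2) mod 3"
    by auto
qed

text \<open>\<open>c\<close> stands for the difference of two codewords and \<open>D\<close> for its support; the assumptions are
  the parity checks and a pair weight of at most 9.\<close>

locale small_pair_support =
  fixes p n :: nat and c :: "nat \<Rightarrow> int" and D :: "nat set"
  assumes prime: "prime p" and p_gt_3: "3 < p" and n_eq: "n = 3 * p" and D_sub: "D \<subseteq> {..<n}"
    and class_moment: "\<And>q k. q < 3 \<Longrightarrow> k < 2 \<Longrightarrow> int p dvd (\<Sum>i\<in>{i \<in> D. i mod 3 = q}. c i * int i ^ k)"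
    and global_moment: "\<And>k. k \<in> {2, 3} \<Longrightarrow> int p dvd (\<Sum>i\<in>D. c i * int i ^ k)"
    and card_pair_support: "card {i. i < n \<and> (i \<in> D \<or> (i + 1) mod n \<in> D)} \<le> 9"
begin

definition cls :: "nat \<Rightarrow> nat set" where
  "cls q = {i \<in> D. i mod 3 = q}"

definition vanishes :: "nat \<Rightarrow> bool" where
  "vanishes q \<longleftrightarrow> (\<forall>i\<in>cls q. int p dvd c i)"

definition cyc_suc :: "nat \<Rightarrow> nat" where
  "cyc_suc i = (i + 1) mod n"

lemma finite_D: "finite D"
  using D_sub by (rule finite_subset) simp

lemma finite_cls: "finite (cls q)"
  using finite_D by (simp add: cls_def)

lemma cls_subset: "cls q \<subseteq> D"
  by (auto simp: cls_def)

lemma dvd_if_vanishes: "i \<in> D \<Longrightarrow> vanishes (i mod 3) \<Longrightarrow> int p dvd c i"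
  by (simp add: vanishes_def cls_def)

lemma cls_moment: "q < 3 \<Longrightarrow> k < 2 \<Longrightarrow> int p dvd (\<Sum>i\<in>cls q. c i * int i ^ k)"
  unfolding cls_def by (rule class_moment)

lemma cls_residues_distinct:
  assumes "i \<in> cls q" "i' \<in> cls q" "int p dvd (int i - int i')"
  shows "i = i'"
proof -
  have "[i = i'] (mod 3)" using assms(1,2) by (simp add: cls_def cong_def)
  moreover have "[i = i'] (mod p)"
    using assms(3) by (simp add: cong_iff_dvd_diff flip: cong_int_iff)
  moreover have "coprime 3 p"
    using prime p_gt_3 by (metis coprime_commute dvd_imp_le not_le prime_imp_coprime zero_less_numeral)
  ultimately have "[i = i'] (mod n)" unfolding n_eq by (simp add: coprime_cong_mult_nat)
  moreover have "i < n" "i' < n" using assms(1,2) D_sub cls_subset by auto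
  ultimately show ?thesis using cong_less_modulus_unique_nat by blast
qed

lemma vanishes_on_cls_if_moments:
  assumes "\<And>k. k < card (cls q) \<Longrightarrow> int p dvd (\<Sum>i\<in>cls q. d i * int i ^ k)"
  shows "\<forall>i\<in>cls q. int p dvd d i"
  using prime_dvd_coeffs_of_power_sums[of "int p" "cls q" int d] prime finite_cls
    cls_residues_distinct assms by auto

lemma vanishes_if_card_le_2: "q < 3 \<Longrightarrow> card (cls q) \<le> 2 \<Longrightarrow> vanishes q"
  unfolding vanishes_def using cls_moment by (intro vanishes_on_cls_if_moments) simp

lemma global_moment_on:
  assumes "B \<subseteq> D" "\<And>i. i \<in> D - B \<Longrightarrow> int p dvd c i" "k \<in> {2, 3}"
  shows "int p dvd (\<Sum>i\<in>B. c i * int i ^ k)"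
proof -
  have "(\<Sum>i\<in>B. c i * int i ^ k) = (\<Sum>i\<in>D. c i * int i ^ k) - (\<Sum>i\<in>D - B. c i * int i ^ k)"
    using sum.subset_diff[OF assms(1) finite_D, of "\<lambda>i. c i * int i ^ k"] by simp
  moreover have "int p dvd (\<Sum>i\<in>D - B. c i * int i ^ k)"
    by (intro dvd_sum dvd_mult2 assms(2))
  ultimately show ?thesis using global_moment[OF assms(3)] by (simp add: dvd_diff)
qed

lemma vanishes_if_others_vanish:
  assumes q: "q < 3" and "card (cls q) \<le> 4"
    and "vanishes ((q + 1) mod 3)" "vanishes ((q + 2) mod 3)"
  shows "vanishes q"
proof -
  have others: "int p dvd c i" if "i \<in> D - cls q" for i
  proof -
    have "i \<in> D" "i mod 3 \<noteq> q" using that by (auto simp: cls_def)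
    with q show ?thesis using assms(3,4) dvd_if_vanishes by (cases rule: mod_3_cases[of q i]) auto
  qed
  have "int p dvd (\<Sum>i\<in>cls q. c i * int i ^ k)" if "k < 4" for k
  proof (cases "k < 2")
    case True
    then show ?thesis using cls_moment q by simp
  next
    case False
    then show ?thesis using that others cls_subset by (intro global_moment_on) auto
  qed
  then show ?thesis unfolding vanishes_def using assms(2) by (intro vanishes_on_cls_if_moments) simp
qed

lemma cyc_suc_less: "cyc_suc i < n"
  unfolding cyc_suc_def using p_gt_3 n_eq by simp

lemma cyc_suc_mod_3: "cyc_suc i mod 3 = (i + 1) mod 3"
  unfolding cyc_suc_def using n_eq by (simp add: mod_mod_cancel)

lemma cyc_suc_cong: "[int (cyc_suc i) = int i + 1] (mod int p)"
proof -
  have "[cyc_suc i = i + 1] (mod p)" unfolding cyc_suc_def cong_def using n_eq by (simp add: mod_mod_cancel)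
  then have "[int (cyc_suc i) = int (i + 1)] (mod int p)" by (simp only: cong_int_iff)
  then show ?thesis by (simp add: ac_simps)
qed

lemma cyc_suc_eq:
  assumes "i < n"
  shows "cyc_suc i = (if i + 1 < n then i + 1 else 0)"
proof (cases "i + 1 < n")
  case False
  then have "i + 1 = n" using assms by simp
  then show ?thesis by (simp add: cyc_suc_def)
qed (simp add: cyc_suc_def)

lemma inj_on_cyc_suc: "inj_on cyc_suc {..<n}"
  by (rule inj_onI) (auto simp: cyc_suc_eq split: if_splits)

lemma cyc_suc_image: "cyc_suc ` {..<n} = {..<n}"
  using inj_on_cyc_suc cyc_suc_less by (intro endo_inj_surj) auto

lemma sum_cyc_suc_image_cong:
  assumes "A \<subseteq> {..<n}"
  shows "[(\<Sum>i\<in>cyc_suc ` A. f i * int i ^ k) = (\<Sum>j\<in>A. f (cyc_suc j) * (int j + 1) ^ k)] (mod int p)"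
proof -
  have "inj_on cyc_suc A" using inj_on_cyc_suc assms by (rule inj_on_subset)
  then have "(\<Sum>i\<in>cyc_suc ` A. f i * int i ^ k) = (\<Sum>j\<in>A. f (cyc_suc j) * int (cyc_suc j) ^ k)"
    by (simp add: sum.reindex)
  also have "[\<dots> = (\<Sum>j\<in>A. f (cyc_suc j) * (int j + 1) ^ k)] (mod int p)"
    using cyc_suc_cong by (intro cong_sum cong_mult cong_pow cong_refl)
  finally show ?thesis .
qed

lemma adjacent_classes_vanish:
  assumes q: "q < 3" and card_q: "card (cls q) = 3"
    and shift: "cyc_suc ` cls q = cls ((q + 1) mod 3)" and "vanishes ((q + 2) mod 3)"
  shows "vanishes q \<and> vanishes ((q + 1) mod 3)"
proof -
  let ?A = "cls q" and ?B = "cls ((q + 1) mod 3)"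
  have B_shift: "[(\<Sum>i\<in>?B. c i * int i ^ k) = (\<Sum>j\<in>?A. c (cyc_suc j) * (int j + 1) ^ k)] (mod int p)" for k
    using sum_cyc_suc_image_cong[of ?A c k] cls_subset D_sub unfolding shift by blast
  have "\<forall>j\<in>?A. int p dvd c j \<and> int p dvd c (cyc_suc j)"
  proof (rule shifted_power_sums_dvd[where t = int])
    show "prime (int p)" using prime by simp
    show "\<not> int p dvd 3" using p_gt_3 by (auto dest: zdvd_imp_le)
    show "\<forall>x\<in>?A. \<forall>y\<in>?A. int p dvd (int x - int y) \<longrightarrow> x = y" using cls_residues_distinct by blast
    show "int p dvd (\<Sum>j\<in>?A. c j * int j ^ k)" if "k < 2" for k
      using cls_moment q that by simp
    show "int p dvd (\<Sum>j\<in>?A. c (cyc_suc j) * (int j + 1) ^ k)" if "k < 2" for k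
      using cls_moment[of "(q + 1) mod 3" k] that cong_dvd_iff[OF B_shift[of k]] by simp
    show "int p dvd (\<Sum>j\<in>?A. c j * int j ^ k) + (\<Sum>j\<in>?A. c (cyc_suc j) * (int j + 1) ^ k)"
      if k: "k \<in> {2, 3}" for k
    proof -
      have disj: "?A \<inter> ?B = {}" using mod_3_rotate(3)[OF q] by (auto simp: cls_def)
      have "int p dvd (\<Sum>i\<in>?A \<union> ?B. c i * int i ^ k)"
      proof (rule global_moment_on[OF _ _ k])
        show "?A \<union> ?B \<subseteq> D" using cls_subset by blast
        fix i assume "i \<in> D - (?A \<union> ?B)"
        then have "i \<in> D" "i mod 3 \<noteq> q" "i mod 3 \<noteq> (q + 1) mod 3" by (auto simp: cls_def)
        with q show "int p dvd c i" using assms(4) dvd_if_vanishes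
          by (cases rule: mod_3_cases[of q i]) auto
      qed
      moreover have "(\<Sum>i\<in>?A \<union> ?B. c i * int i ^ k) = (\<Sum>i\<in>?A. c i * int i ^ k) + (\<Sum>i\<in>?B. c i * int i ^ k)"
        using disj finite_cls by (simp add: sum.union_disjoint)
      ultimately have "int p dvd (\<Sum>i\<in>?A. c i * int i ^ k) + (\<Sum>i\<in>?B. c i * int i ^ k)"
        by simp
      moreover have "[(\<Sum>i\<in>?A. c i * int i ^ k) + (\<Sum>i\<in>?B. c i * int i ^ k)
          = (\<Sum>j\<in>?A. c j * int j ^ k) + (\<Sum>j\<in>?A. c (cyc_suc j) * (int j + 1) ^ k)] (mod int p)"
        by (intro cong_add cong_refl B_shift)
      ultimately show ?thesis by (simp add: cong_dvd_iff)
    qed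
  qed (use finite_cls card_q in simp_all)
  then show ?thesis unfolding vanishes_def shift[symmetric] by blast
qed


definition pair_support :: "nat set" where
  "pair_support = {i. i < n \<and> (i \<in> D \<or> cyc_suc i \<in> D)}"

definition pair_cls :: "nat \<Rightarrow> nat set" where
  "pair_cls q = {i \<in> pair_support. i mod 3 = q}"

definition pred_cls :: "nat \<Rightarrow> nat set" where
  "pred_cls q = {i. i < n \<and> i mod 3 = q \<and> cyc_suc i \<in> D}"

lemma card_pair_support_le: "card pair_support \<le> 9"
  using card_pair_support by (simp add: pair_support_def cyc_suc_def)

lemma finite_pair_cls: "finite (pair_cls q)"
  by (simp add: pair_cls_def pair_support_def)

lemma pair_cls_eq: "pair_cls q = cls q \<union> pred_cls q"
  using D_sub by (auto simp: pair_cls_def pair_support_def cls_def pred_cls_def)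

lemma inj_on_cyc_suc_pred_cls: "inj_on cyc_suc (pred_cls q)"
  using inj_on_cyc_suc by (rule inj_on_subset) (auto simp: pred_cls_def)

lemma cyc_suc_image_pred_cls:
  assumes q: "q < 3"
  shows "cyc_suc ` pred_cls q = cls ((q + 1) mod 3)"
proof
  show "cyc_suc ` pred_cls q \<subseteq> cls ((q + 1) mod 3)"
    by (auto simp: pred_cls_def cls_def cyc_suc_mod_3 mod_Suc_eq)
  show "cls ((q + 1) mod 3) \<subseteq> cyc_suc ` pred_cls q"
  proof
    fix j assume j: "j \<in> cls ((q + 1) mod 3)"
    then have "j \<in> cyc_suc ` {..<n}" using D_sub cls_subset cyc_suc_image by auto
    then obtain i where i: "i < n" "j = cyc_suc i" by auto
    have "(i + 1) mod 3 = (q + 1) mod 3" using j i cyc_suc_mod_3 by (simp add: cls_def)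
    then have "i mod 3 = q" using q by (metis cong_def cong_add_rcancel_nat mod_less)
    then show "j \<in> cyc_suc ` pred_cls q" using i j cls_subset by (auto simp: pred_cls_def)
  qed
qed

lemma card_pred_cls: "q < 3 \<Longrightarrow> card (pred_cls q) = card (cls ((q + 1) mod 3))"
  using card_image[OF inj_on_cyc_suc_pred_cls] cyc_suc_image_pred_cls by metis

lemma card_cls_le_pair_cls:
  "card (cls q) \<le> card (pair_cls q)"
  "q < 3 \<Longrightarrow> card (cls ((q + 1) mod 3)) \<le> card (pair_cls q)"
  using pair_cls_eq finite_pair_cls card_pred_cls card_mono
  by (metis Un_upper1, metis Un_upper2)

lemma card_pair_cls_sum:
  assumes q: "q < 3"
  shows "card (pair_cls q) + card (pair_cls ((q + 1) mod 3)) + card (pair_cls ((q + 2) mod 3)) \<le> 9"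
proof -
  have disj: "pair_cls r \<inter> pair_cls r' = {}" if "r \<noteq> r'" for r r'
    using that by (auto simp: pair_cls_def)
  have "card (pair_cls q) + card (pair_cls ((q + 1) mod 3)) + card (pair_cls ((q + 2) mod 3))
      = card (pair_cls q \<union> pair_cls ((q + 1) mod 3) \<union> pair_cls ((q + 2) mod 3))"
    using mod_3_rotate[OF q] disj finite_pair_cls by (simp add: card_Un_disjoint Int_Un_distrib2)
  also have "\<dots> \<le> card pair_support"
    by (intro card_mono) (auto simp: pair_support_def pair_cls_def)
  also have "\<dots> \<le> 9" by (rule card_pair_support_le)
  finally show ?thesis .
qed

lemma card_cls_le_4: "q < 3 \<Longrightarrow> card (cls q) \<le> 4"
  using card_pair_cls_sum card_cls_le_pair_cls(1)[of q]
    card_cls_le_pair_cls(2)[of "(q + 2) mod 3"] mod_3_rotate(2)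
  by fastforce

lemma cyc_suc_image_cls_if_tight:
  assumes q: "q < 3"
    and "card (pair_cls q) \<le> card (cls q)" "card (pair_cls q) \<le> card (cls ((q + 1) mod 3))"
  shows "cyc_suc ` cls q = cls ((q + 1) mod 3)"
proof -
  have "cls q \<subseteq> pair_cls q" "card (cls q) = card (pair_cls q)"
    using pair_cls_eq assms(2) card_cls_le_pair_cls(1)[of q] by auto
  then have "cls q = pair_cls q" using card_subset_eq[OF finite_pair_cls] by blast
  have "pred_cls q \<subseteq> pair_cls q" using pair_cls_eq by auto
  moreover from this have "card (pred_cls q) = card (pair_cls q)"
    using assms(3) card_pred_cls[OF q] card_mono[OF finite_pair_cls] by (metis le_antisym)
  ultimately have "pred_cls q = pair_cls q" using card_subset_eq[OF finite_pair_cls] by blast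
  then show ?thesis using cyc_suc_image_pred_cls[OF q] \<open>cls q = pair_cls q\<close> by simp
qed

lemma adjacent_large_classes_shift:
  assumes q: "q < 3" and "3 \<le> card (cls q)" "3 \<le> card (cls ((q + 1) mod 3))"
  shows "card (cls q) = 3 \<and> cyc_suc ` cls q = cls ((q + 1) mod 3)"
proof -
  \<comment> \<open>Each class is counted in its own \<open>pair_cls\<close> and in that of the preceding class, so two large
    classes use up the budget of 9 in all three \<open>pair_cls\<close>.\<close>
  have "card (cls q) \<le> card (pair_cls ((q + 2) mod 3))"
    using card_cls_le_pair_cls(2)[of "(q + 2) mod 3"] mod_3_rotate(2)[OF q] by simp
  then have "card (pair_cls q) = 3" "card (cls q) = 3" "card (cls ((q + 1) mod 3)) = 3"
    using assms card_pair_cls_sum[OF q] card_cls_le_pair_cls[of q]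
      card_cls_le_pair_cls(1)[of "(q + 1) mod 3"] by linarith+
  then show ?thesis using cyc_suc_image_cls_if_tight[OF q] by simp
qed

lemma D_empty_if_all_shifted:
  assumes "\<And>q. q < 3 \<Longrightarrow> cyc_suc ` cls q = cls ((q + 1) mod 3)"
  shows "D = {}"
proof (rule ccontr)
  assume "D \<noteq> {}"
  then obtain s where s: "s \<in> D" by blast
  have closed: "cyc_suc i \<in> D" if "i \<in> D" for i
  proof -
    have "i \<in> cls (i mod 3)" using that by (simp add: cls_def)
    then show ?thesis using assms[of "i mod 3"] cls_subset by auto
  qed
  have orbit: "(s + k) mod n \<in> D" for k
  proof (induction k)
    case 0
    then show ?case using s D_sub by auto
  next
    case (Suc k)
    have "(s + Suc k) mod n = cyc_suc ((s + k) mod n)" by (simp add: cyc_suc_def mod_Suc_eq)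
    then show ?case using closed Suc.IH by simp
  qed
  have "s < n" using s D_sub by auto
  have "{..<n} \<subseteq> D"
  proof
    fix j assume "j \<in> {..<n}"
    then have "(s + (j + n - s)) mod n = j" using \<open>s < n\<close> by simp
    then show "j \<in> D" using orbit[of "j + n - s"] by simp
  qed
  then have "n \<le> card pair_support"
    using card_mono[of pair_support "{..<n}"] by (auto simp: pair_support_def)
  then show False using card_pair_support_le p_gt_3 n_eq by linarith
qed

lemma all_vanish_if_adjacent_large:
  assumes q: "q < 3" "3 \<le> card (cls q)" "3 \<le> card (cls ((q + 1) mod 3))" and "r < 3"
  shows "vanishes r"
proof -
  note rot = mod_3_rotate[OF q(1)]
  have shift: "card (cls q) = 3" "cyc_suc ` cls q = cls ((q + 1) mod 3)"
    using adjacent_large_classes_shift[OF q] by auto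
  show ?thesis
  proof (cases "card (cls ((q + 2) mod 3)) \<le> 2")
    case True
    then have "vanishes ((q + 2) mod 3)" by (simp add: vanishes_if_card_le_2)
    moreover have "vanishes q \<and> vanishes ((q + 1) mod 3)"
      using adjacent_classes_vanish[OF q(1) shift] calculation by blast
    ultimately show ?thesis by (cases rule: mod_3_cases[OF q(1), of r]) (use assms in auto)
  next
    case False
    then have "3 \<le> card (cls ((q + 2) mod 3))" by simp
    then have "cyc_suc ` cls ((q + 1) mod 3) = cls ((q + 2) mod 3)"
      "cyc_suc ` cls ((q + 2) mod 3) = cls q"
      using adjacent_large_classes_shift[of "(q + 1) mod 3"] adjacent_large_classes_shift[of "(q + 2) mod 3"] q(2,3) rot(1,2)
      by simp_all
    then have "cyc_suc ` cls r' = cls ((r' + 1) mod 3)" if "r' < 3" for r'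
      using shift(2) rot by (cases rule: mod_3_cases[OF q(1), of r']) (use that in auto)
    then have "D = {}" by (rule D_empty_if_all_shifted)
    then show ?thesis unfolding vanishes_def cls_def by simp
  qed
qed

lemma all_vanish_if_one_large:
  assumes q: "q < 3" "3 \<le> card (cls q)"
    and no_adjacent: "\<And>q'. q' < 3 \<Longrightarrow> card (cls q') \<le> 2 \<or> card (cls ((q' + 1) mod 3)) \<le> 2"
    and "r < 3"
  shows "vanishes r"
proof -
  have "card (cls ((q + 1) mod 3)) \<le> 2" using no_adjacent[OF q(1)] q(2) by linarith
  moreover have "(q + 2) mod 3 < 3" by simp
  then have "card (cls ((q + 2) mod 3)) \<le> 2"
    using no_adjacent q(2) mod_3_rotate(2)[OF q(1)] by fastforce
  ultimately have "vanishes ((q + 1) mod 3)" "vanishes ((q + 2) mod 3)"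
    by (simp_all add: vanishes_if_card_le_2)
  moreover from this have "vanishes q"
    using vanishes_if_others_vanish[OF q(1) card_cls_le_4[OF q(1)]] by blast
  ultimately show ?thesis by (cases rule: mod_3_cases[OF q(1), of r]) (use assms in auto)
qed

lemma all_classes_vanish:
  assumes "r < 3"
  shows "vanishes r"
proof (cases "\<exists>q<3. 3 \<le> card (cls q) \<and> 3 \<le> card (cls ((q + 1) mod 3))")
  case True
  then show ?thesis using all_vanish_if_adjacent_large assms by blast
next
  case no_adjacent_pair: False
  then have no_adjacent: "card (cls q) \<le> 2 \<or> card (cls ((q + 1) mod 3)) \<le> 2" if "q < 3" for q
  proof -
    have "\<not> (3 \<le> card (cls q) \<and> 3 \<le> card (cls ((q + 1) mod 3)))"
      using no_adjacent_pair that by blast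
    then show ?thesis by linarith
  qed
  show ?thesis
  proof (cases "\<exists>q<3. 3 \<le> card (cls q)")
    case True
    then show ?thesis using all_vanish_if_one_large no_adjacent assms by blast
  next
    case False
    then have "\<not> 3 \<le> card (cls r)" using assms by blast
    then show ?thesis using assms vanishes_if_card_le_2 by simp
  qed
qed

lemma dvd_on_D: "i \<in> D \<Longrightarrow> int p dvd c i"
  using all_classes_vanish dvd_if_vanishes by simp

end

definition parity_check :: "nat \<Rightarrow> nat \<Rightarrow> int" where
  "parity_check j i =
     (if j < 6 then (if i mod 3 = j div 2 then int i ^ (j mod 2) else 0) else int i ^ (j - 4))"

definition pair_code :: "nat \<Rightarrow> nat list set" where
  "pair_code p = linear_code p (3 * p) 8 parity_check"

lemma moments_of_parity_checks:
  fixes c :: "nat \<Rightarrow> int"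
  assumes D_sub: "D \<subseteq> {..<n}" and zero: "\<And>i. i < n \<Longrightarrow> i \<notin> D \<Longrightarrow> c i = 0"
    and checks: "\<And>j. j < 8 \<Longrightarrow> int p dvd (\<Sum>i<n. c i * parity_check j i)"
  shows "\<And>q k. q < 3 \<Longrightarrow> k < 2 \<Longrightarrow> int p dvd (\<Sum>i\<in>{i \<in> D. i mod 3 = q}. c i * int i ^ k)"
    and "\<And>k. k \<in> {2, 3} \<Longrightarrow> int p dvd (\<Sum>i\<in>D. c i * int i ^ k)"
proof -
  have restrict: "(\<Sum>i<n. c i * f i) = (\<Sum>i\<in>D. c i * f i)" for f :: "nat \<Rightarrow> int"
    using D_sub zero by (intro sum.mono_neutral_right) auto
  show "int p dvd (\<Sum>i\<in>{i \<in> D. i mod 3 = q}. c i * int i ^ k)" if "q < 3" "k < 2" for q k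
  proof -
    from that have "parity_check (2 * q + k) i = (if i mod 3 = q then int i ^ k else 0)" for i
      by (simp add: parity_check_def)
    moreover have "2 * q + k < 8" using that by simp
    ultimately have "int p dvd (\<Sum>i\<in>D. c i * (if i mod 3 = q then int i ^ k else 0))"
      using checks[of "2 * q + k"] unfolding restrict by simp
    then show ?thesis
      by (simp add: sum.inter_filter[OF finite_subset[OF D_sub], symmetric] if_distrib
          cong: if_cong)
  qed
  show "int p dvd (\<Sum>i\<in>D. c i * int i ^ k)" if "k \<in> {2, 3}" for k
    using checks[of "k + 4"] that unfolding restrict by (auto simp: parity_check_def)
qed

lemma pair_code_dist_ge_10:
  assumes "prime p" "3 < p" and x: "x \<in> pair_code p" and y: "y \<in> pair_code p" and "x \<noteq> y"
  shows "10 \<le> pair_dist x y"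
proof (rule ccontr)
  define n where "n = 3 * p"
  define D where "D = {i. i < n \<and> x ! i \<noteq> y ! i}"
  define c where "c i = int (x ! i) - int (y ! i)" for i
  have words: "x \<in> words p n" "y \<in> words p n"
    using x y by (simp_all add: pair_code_def linear_code_def n_def)
  assume "\<not> 10 \<le> pair_dist x y"
  moreover have "pair_dist x y = card {i. i < n \<and> (i \<in> D \<or> (i + 1) mod n \<in> D)}"
    using words \<open>3 < p\<close> unfolding pair_dist_def Let_def words_def D_def n_def
    by (intro arg_cong[where f = card]) auto
  ultimately have card_le_9: "card {i. i < n \<and> (i \<in> D \<or> (i + 1) mod n \<in> D)} \<le> 9" by simp
  have D_sub: "D \<subseteq> {..<n}" by (auto simp: D_def)
  have checks: "int p dvd (\<Sum>i<n. c i * parity_check j i)" if "j < 8" for j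
    using linear_code_diff[OF x[unfolded pair_code_def] y[unfolded pair_code_def] that]
    by (simp add: c_def n_def)
  have "c i = 0" if "i \<notin> D" "i < n" for i using that by (simp add: c_def D_def)
  note moments = moments_of_parity_checks[OF D_sub this checks]
  interpret small_pair_support p n c D
    using assms(1,2) D_sub card_le_9 moments by unfold_locales (simp_all add: n_def)
  have "[x ! i = y ! i] (mod p)" if "i < n" for i
  proof (cases "i \<in> D")
    case True
    then have "int p dvd int (x ! i) - int (y ! i)" using dvd_on_D c_def by simp
    then show ?thesis by (simp add: cong_iff_dvd_diff flip: cong_int_iff)
  qed (use that in \<open>simp add: D_def\<close>)
  then have "x = y" using words by (rule words_eqI[rotated 2])
  then show False using \<open>x \<noteq> y\<close> by contradiction
qed

theorem theorem1:
  fixes p :: nat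
  assumes "prime p" and "odd p" and "3 dvd (p - 1)"
  shows "\<exists>C. C \<subseteq> words p (3 * p) \<and> min_pair_dist C = 10 \<and> card C = p ^ (3 * p - 10 + 2)"
proof -
  \<comment> \<open>The hypotheses are only used to exclude \<open>p = 2\<close> and \<open>p = 3\<close>.\<close>
  have "p \<noteq> 2" "p \<noteq> 3" using assms(2,3) by auto
  then have p: "3 < p" using prime_ge_2_nat[OF assms(1)] by linarith
  let ?C = "pair_code p"
  have C_sub: "?C \<subseteq> words p (3 * p)" by (auto simp: pair_code_def linear_code_def)
  have far: "10 \<le> pair_dist x y" if "x \<in> ?C" "y \<in> ?C" "x \<noteq> y" for x y
    using pair_code_dist_ge_10[OF assms(1) p that] .
  have "card ?C \<le> p ^ (3 * p - 8)"
    using pair_singleton_bound[OF C_sub _ far] by simp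
  moreover have "p ^ (3 * p - 8) \<le> card ?C"
    unfolding pair_code_def using p by (intro card_linear_code_ge) auto
  ultimately have card_C: "card ?C = p ^ (3 * p - 8)" by simp
  moreover have "p ^ (3 * p - 9) < p ^ (3 * p - 8)"
    using p by (intro power_strict_increasing) auto
  ultimately obtain x y where "x \<in> ?C" "y \<in> ?C" "x \<noteq> y" "pair_dist x y \<le> 10"
    using exists_close_pair[OF C_sub, of 9] by auto
  then have "min_pair_dist ?C = 10"
    using finite_subset[OF C_sub finite_words] far by (intro min_pair_dist_eqI) auto
  moreover have "3 * p - 10 + 2 = 3 * p - 8" using p by simp
  ultimately show ?thesis using C_sub card_C by metis
qed

end
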